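(* Let $H$ be a GCD-monoid. Let $a,c\in H$ and $b,d\in\mathrm{Sqf}\,H$ be such that $a$ and $b$ are relatively prime, $c$ and $d$ are relatively prime, and there exist $e,f\in\mathrm{Sqf}\,H$ and $m,n\in\mathbb{N}$ with $e^2\mid a$, $a\mid e^m$, $f^2\mid c$, $c\mid f^n$. If $ab\sim cd$, then $a\sim c$ and $b\sim d$.
   Context: A monoid means a commutative cancellative monoid (written multiplicatively); $H^{\ast}$ is its unit group, $\mathbb{N}=\{1,2,\dots\}$. $x\sim y$ means $x=uy$ with $u\in H^{\ast}$. Elements are relatively prime if all their common divisors are units. $\mathrm{Sqf}\,H$ is the set of elements not of the form $b^2c$ with $b,c\in H$, $b\notin H^{\ast}$. $H$ is a GCD-monoid if any two elements of $H$ have a greatest common divisor. *)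

theory Defs
  imports Main
begin

text \<open>A monoid is a commutative cancellative monoid; we take the carrier to be the
whole type of class comm_monoid_mult and assume cancellativity explicitly.\<close>

definition cancellative :: "'a::comm_monoid_mult itself \<Rightarrow> bool" where
  "cancellative _ \<longleftrightarrow> (\<forall>a b c :: 'a. a * b = a * c \<longrightarrow> b = c)"

definition munit :: "'a::comm_monoid_mult \<Rightarrow> bool" where
  "munit u \<longleftrightarrow> (\<exists>v. u * v = 1)"

definition massoc :: "'a::comm_monoid_mult \<Rightarrow> 'a \<Rightarrow> bool" where
  "massoc x y \<longleftrightarrow> (\<exists>u. munit u \<and> x = u * y)"

definition rel_prime :: "'a::comm_monoid_mult \<Rightarrow> 'a \<Rightarrow> bool" where
  "rel_prime x y \<longleftrightarrow> (\<forall>d. d dvd x \<and> d dvd y \<longrightarrow> munit d)"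

definition Sqf :: "'a::comm_monoid_mult set" where
  "Sqf = {a. \<not> (\<exists>b c. \<not> munit b \<and> a = b^2 * c)}"

definition is_gcd :: "'a::comm_monoid_mult \<Rightarrow> 'a \<Rightarrow> 'a \<Rightarrow> bool" where
  "is_gcd g x y \<longleftrightarrow> g dvd x \<and> g dvd y \<and> (\<forall>d. d dvd x \<and> d dvd y \<longrightarrow> d dvd g)"

definition gcd_monoid :: "'a::comm_monoid_mult itself \<Rightarrow> bool" where
  "gcd_monoid _ \<longleftrightarrow> (\<forall>x y :: 'a. \<exists>g. is_gcd g x y)"

end

theory Submission
  imports Defs
begin

text \<open>
  If \<open>e\<^sup>2 \<bar> a \<bar> e\<^sup>m\<close>, then every squarefree divisor \<open>p\<close> of \<open>a\<close> divides \<open>e\<close>, so \<open>p\<^sup>2\<close> divides \<open>a\<close>.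
  A common divisor \<open>p\<close> of \<open>a\<close> and \<open>d\<close> would therefore give \<open>p\<^sup>2 \<bar> cd\<close>; as \<open>p\<^sup>2\<close> is prime to \<open>c\<close>,
  Euclid's lemma (valid in GCD-monoids) yields \<open>p\<^sup>2 \<bar> d\<close>, so \<open>p\<close> is a unit since \<open>d\<close> is squarefree.
  Hence \<open>a\<close> is prime to \<open>d\<close> and \<open>a \<bar> cd\<close> gives \<open>a \<bar> c\<close>. By symmetry \<open>c \<bar> a\<close>, so \<open>a \<sim> c\<close>, and
  cancelling \<open>a\<close> in \<open>ab \<sim> cd\<close> gives \<open>b \<sim> d\<close>.
\<close>

lemma munit_iff_dvd_one: "munit u \<longleftrightarrow> u dvd 1"
  unfolding munit_def dvd_def by (metis (full_types))

lemma munit_mult: "munit u \<Longrightarrow> munit v \<Longrightarrow> munit (u * v)"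
  unfolding munit_iff_dvd_one using mult_dvd_mono[of u 1 v 1] by simp

lemma dvd_mult_munit_iff:
  assumes "munit u"
  shows "x dvd y * u \<longleftrightarrow> x dvd y"
proof
  obtain v where v: "u * v = 1" using assms unfolding munit_def by blast
  assume "x dvd y * u"
  then have "x dvd y * u * v" by (rule dvd_mult2)
  then show "x dvd y" using v by (simp add: mult.assoc)
qed simp

lemma massoc_sym: "massoc x y \<Longrightarrow> massoc y x"
proof -
  assume "massoc x y"
  then obtain u v where uv: "u * v = 1" and x: "x = u * y"
    unfolding massoc_def munit_def by blast
  have "v * x = (u * v) * y" using x by (simp add: mult_ac)
  then have "y = v * x" using uv by simp
  moreover have "munit v" using uv unfolding munit_def by (auto simp: mult.commute)
  ultimately show "massoc y x" unfolding massoc_def by blast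
qed

lemma massoc_imp_dvd: "massoc x y \<Longrightarrow> x dvd y"
proof -
  assume "massoc x y"
  then have "massoc y x" by (rule massoc_sym)
  then obtain v where "y = v * x" unfolding massoc_def by blast
  then show "x dvd y" by simp
qed

lemma rel_prime_sym: "rel_prime x y \<Longrightarrow> rel_prime y x"
  unfolding rel_prime_def by blast

lemma rel_prime_dvd_mono:
  assumes "rel_prime x y" and "x' dvd x" and "y' dvd y"
  shows "rel_prime x' y'"
  unfolding rel_prime_def
proof (intro allI impI)
  fix t assume t: "t dvd x' \<and> t dvd y'"
  have "t dvd x" using t assms(2) by (blast intro: dvd_trans)
  moreover have "t dvd y" using t assms(3) by (blast intro: dvd_trans)
  ultimately show "munit t" using assms(1) unfolding rel_prime_def by blast
qed

lemma rel_prime_dvd_imp_munit: "rel_prime x y \<Longrightarrow> x dvd y \<Longrightarrow> munit x"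
  unfolding rel_prime_def using dvd_refl by blast

lemma Sqf_square_dvd_imp_munit:
  assumes "p \<in> Sqf" and "q\<^sup>2 dvd p"
  shows "munit q"
proof -
  obtain k where "p = q\<^sup>2 * k" using assms(2) by (rule dvdE)
  then show ?thesis using assms(1) unfolding Sqf_def by blast
qed

lemma Sqf_dvd:
  assumes "p \<in> Sqf" and "q dvd p"
  shows "q \<in> Sqf"
proof -
  obtain k where k: "p = q * k" using assms(2) by blast
  have "munit b" if "q = b\<^sup>2 * c" for b c
  proof -
    have "p = b\<^sup>2 * (c * k)" using k that by (simp add: mult.assoc)
    then show ?thesis using assms(1) unfolding Sqf_def by blast
  qed
  then show ?thesis unfolding Sqf_def by blast
qed

context
  assumes cancel: "cancellative TYPE('a::comm_monoid_mult)"
begin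

lemma mult_left_cancel: "(a::'a) * b = a * c \<Longrightarrow> b = c"
  using cancel unfolding cancellative_def by blast

lemma mult_dvd_mult_left_cancel:
  assumes "(z::'a) * x dvd z * y"
  shows "x dvd y"
proof -
  obtain k where "z * y = z * x * k" using assms by (rule dvdE)
  then have "y = x * k" by (simp add: mult.assoc mult_left_cancel)
  then show ?thesis by simp
qed

lemma mult_dvd_self_imp_munit: "(a::'a) * t dvd a \<Longrightarrow> munit t"
  using mult_dvd_mult_left_cancel[of a t 1] by (simp add: munit_iff_dvd_one)

lemma dvd_antisym_imp_massoc:
  assumes "(a::'a) dvd c" and "c dvd a"
  shows "massoc a c"
proof -
  obtain u where u: "c = a * u" using assms(1) by (rule dvdE)
  obtain v where v: "a = c * v" using assms(2) by (rule dvdE)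
  have "a * 1 = a * (u * v)" using u v by (metis mult.assoc mult_1_right)
  then have "1 = u * v" by (rule mult_left_cancel)
  then have "v * u = 1" by (simp add: mult.commute)
  then have "munit v" unfolding munit_def by blast
  moreover have "a = v * c" using v by (simp add: mult.commute)
  ultimately show ?thesis unfolding massoc_def by blast
qed

lemma massoc_mult_cancel_left:
  assumes "massoc ((a::'a) * b) (c * d)" and "massoc a c"
  shows "massoc b d"
proof -
  obtain w where w: "munit w" "a * b = w * (c * d)"
    using assms(1) unfolding massoc_def by blast
  obtain u where u: "munit u" "a = u * c"
    using assms(2) unfolding massoc_def by blast
  obtain v where v: "u * v = 1" using u(1) unfolding munit_def by blast
  have "a * (v * w * d) = (u * v) * (w * (c * d))" using u(2) by (simp add: mult_ac)
  also have "\<dots> = a * b" using v w(2) by simp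
  finally have "b = v * w * d" by (auto dest: mult_left_cancel)
  moreover have "munit v" using v unfolding munit_def by (auto simp: mult.commute)
  then have "munit (v * w)" using w(1) by (rule munit_mult)
  ultimately show ?thesis unfolding massoc_def by blast
qed

lemma is_gcd_cofactors_rel_prime:
  assumes "is_gcd g x y" and "x = g * (x'::'a)" and "y = g * y'"
  shows "rel_prime x' y'"
  unfolding rel_prime_def
proof (intro allI impI)
  fix t assume "t dvd x' \<and> t dvd y'"
  then have "g * t dvd x" and "g * t dvd y"
    using assms(2,3) by (simp_all add: mult_dvd_mono)
  then have "g * t dvd g" using assms(1) unfolding is_gcd_def by blast
  then show "munit t" by (rule mult_dvd_self_imp_munit)
qed

context
  assumes gcd: "gcd_monoid TYPE('a)"
begin

lemma gcd_exists: "\<exists>g. is_gcd g (x::'a) y"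
  using gcd unfolding gcd_monoid_def by blast

lemma is_gcd_mult_left:
  assumes g: "is_gcd g (x::'a) y"
  shows "is_gcd (z * g) (z * x) (z * y)"
proof -
  obtain h where h: "is_gcd h (z * x) (z * y)" using gcd_exists by blast
  have zg: "z * g dvd z * x" "z * g dvd z * y"
    using g unfolding is_gcd_def by (simp_all add: mult_dvd_mono)
  then have "z * g dvd h" using h unfolding is_gcd_def by blast
  then obtain t where t: "h = z * g * t" by (rule dvdE)
  have "z * (g * t) dvd z * x" and "z * (g * t) dvd z * y"
    using h unfolding is_gcd_def t by (simp_all add: mult.assoc)
  then have "g * t dvd x" and "g * t dvd y" by (simp_all only: mult_dvd_mult_left_cancel)
  then have "g * t dvd g" using g unfolding is_gcd_def by blast
  then have "munit t" by (rule mult_dvd_self_imp_munit)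
  have "d dvd z * g" if "d dvd z * x" and "d dvd z * y" for d
  proof -
    have "d dvd z * g * t" using h that unfolding is_gcd_def t by blast
    then show ?thesis by (simp add: dvd_mult_munit_iff[OF \<open>munit t\<close>])
  qed
  with zg show ?thesis unfolding is_gcd_def by blast
qed

text \<open>Euclid's lemma: since \<open>gcd(x, y)\<close> is a unit, \<open>z\<close> is a gcd of \<open>zx\<close> and \<open>zy\<close>.\<close>

lemma rel_prime_dvd_mult:
  assumes "rel_prime (x::'a) y" and "x dvd y * z"
  shows "x dvd z"
proof -
  obtain g where g: "is_gcd g x y" using gcd_exists by blast
  then have "munit g" using assms(1) unfolding is_gcd_def rel_prime_def by blast
  have "x dvd z * x" and "x dvd z * y" using assms(2) by (simp_all add: mult.commute)
  then have "x dvd z * g" using is_gcd_mult_left[OF g] unfolding is_gcd_def by blast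
  then show ?thesis by (simp add: dvd_mult_munit_iff[OF \<open>munit g\<close>])
qed

lemma rel_prime_mult_right:
  assumes "rel_prime (x::'a) y" and "rel_prime x z"
  shows "rel_prime x (y * z)"
  unfolding rel_prime_def
proof (intro allI impI)
  fix t assume t: "t dvd x \<and> t dvd y * z"
  then have "rel_prime t y" using rel_prime_dvd_mono[OF assms(1), of t y] by simp
  then have "t dvd z" using t by (blast intro: rel_prime_dvd_mult)
  then show "munit t" using t assms(2) unfolding rel_prime_def by blast
qed

lemma rel_prime_power_right: "rel_prime (x::'a) y \<Longrightarrow> rel_prime x (y ^ k)"
proof (induction k)
  case 0
  then show ?case unfolding rel_prime_def munit_iff_dvd_one by simp
next
  case (Suc k)
  then show ?case using rel_prime_mult_right by simp
qed

text \<open>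
  With \<open>g = gcd(p, e)\<close>, \<open>p = g p'\<close>, \<open>e = g e'\<close>: the cofactor \<open>p'\<close> is prime to \<open>e'\<close>, and to \<open>g\<close>
  because \<open>p\<close> is squarefree, yet it divides \<open>g\<^sup>k e'\<^sup>k\<^sup>+\<^sup>1\<close>; so \<open>p'\<close> is a unit.
\<close>

lemma Sqf_dvd_power_imp_dvd:
  assumes p: "(p::'a) \<in> Sqf" and dvd_power: "p dvd e ^ k"
  shows "p dvd e"
proof (cases k)
  case 0
  then have "p dvd 1" using dvd_power by simp
  then show ?thesis using one_dvd by (rule dvd_trans)
next
  case (Suc k')
  obtain g where g: "is_gcd g p e" using gcd_exists by blast
  then obtain p' e' where p': "p = g * p'" and e': "e = g * e'"
    unfolding is_gcd_def by (blast elim: dvdE)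
  have "rel_prime p' g"
    unfolding rel_prime_def
  proof (intro allI impI)
    fix t assume "t dvd p' \<and> t dvd g"
    then have "t * t dvd g * p'" using mult_dvd_mono[of t g t p'] by (simp add: mult.commute)
    then have "t\<^sup>2 dvd p" using p' by (simp add: power2_eq_square)
    with p show "munit t" by (rule Sqf_square_dvd_imp_munit)
  qed
  then have coprime: "rel_prime p' (g ^ k' * e' ^ k)"
    using rel_prime_mult_right rel_prime_power_right is_gcd_cofactors_rel_prime[OF g p' e']
    by blast
  obtain s where s: "e ^ k = p * s" using dvd_power by (rule dvdE)
  have "g * (g ^ k' * e' ^ k) = e ^ k" using Suc e' by (simp add: power_mult_distrib mult_ac)
  also have "\<dots> = g * (p' * s)" using s p' by (simp add: mult.assoc)
  finally have "p' dvd g ^ k' * e' ^ k" by (auto dest: mult_left_cancel)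
  with coprime have "munit p'" by (rule rel_prime_dvd_imp_munit)
  then obtain v where "p' * v = 1" unfolding munit_def by blast
  then have "g = p * v" using p' by (simp add: mult.assoc)
  then have "p dvd g" by simp
  then show ?thesis using g unfolding is_gcd_def by (blast intro: dvd_trans)
qed

lemma square_dvd_if_Sqf_dvd:
  assumes "(p::'a) \<in> Sqf" and "p dvd a" and "e\<^sup>2 dvd a" and "a dvd e ^ m"
  shows "p\<^sup>2 dvd a"
proof -
  have "p dvd e ^ m" using assms(2,4) by (rule dvd_trans)
  with assms(1) have "p dvd e" by (rule Sqf_dvd_power_imp_dvd)
  then have "p\<^sup>2 dvd e\<^sup>2" by (simp add: power2_eq_square mult_dvd_mono)
  then show ?thesis using assms(3) by (rule dvd_trans)
qed

lemma dvd_if_mult_dvd_mult_Sqf: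
  assumes d: "d \<in> Sqf" and cd: "rel_prime c d"
    and "e\<^sup>2 dvd a" and "a dvd e ^ m" and ab_cd: "(a::'a) * b dvd c * d"
  shows "a dvd c"
proof -
  have a_cd: "a dvd c * d" using dvd_triv_left ab_cd by (rule dvd_trans)
  have "rel_prime a d"
    unfolding rel_prime_def
  proof (intro allI impI)
    fix p assume p: "p dvd a \<and> p dvd d"
    then have "p \<in> Sqf" using d by (blast intro: Sqf_dvd)
    then have "p\<^sup>2 dvd a" using p assms(3,4) square_dvd_if_Sqf_dvd by blast
    have "rel_prime c p" using rel_prime_dvd_mono[OF cd, of c p] p by simp
    then have "rel_prime (p\<^sup>2) c"
      by (simp add: power2_eq_square rel_prime_mult_right rel_prime_sym)
    moreover have "p\<^sup>2 dvd c * d" using \<open>p\<^sup>2 dvd a\<close> a_cd by (rule dvd_trans)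
    ultimately have "p\<^sup>2 dvd d" by (rule rel_prime_dvd_mult)
    with d show "munit p" by (rule Sqf_square_dvd_imp_munit)
  qed
  moreover have "a dvd d * c" using a_cd by (simp add: mult.commute)
  ultimately show ?thesis by (rule rel_prime_dvd_mult)
qed

end

end

theorem proposition5p2:
  fixes a b c d e f :: "'a::comm_monoid_mult" and m n :: nat
  assumes "cancellative TYPE('a)"
    and "gcd_monoid TYPE('a)"
    and "b \<in> Sqf" and "d \<in> Sqf"
    and "rel_prime a b" and "rel_prime c d"
    and "e \<in> Sqf" and "f \<in> Sqf" and "m \<ge> 1" and "n \<ge> 1"
    and "e^2 dvd a" and "a dvd e^m" and "f^2 dvd c" and "c dvd f^n"
    and "massoc (a * b) (c * d)"
  shows "massoc a c \<and> massoc b d"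
proof -
  note cancel = assms(1) and gcd = assms(2)
  have "a dvd c"
    using dvd_if_mult_dvd_mult_Sqf[OF cancel gcd assms(4,6,11,12)] massoc_imp_dvd[OF assms(15)] .
  moreover have "c dvd a"
    using dvd_if_mult_dvd_mult_Sqf[OF cancel gcd assms(3,5,13,14)] massoc_imp_dvd[OF massoc_sym[OF assms(15)]] .
  ultimately have "massoc a c" by (rule dvd_antisym_imp_massoc[OF cancel])
  moreover have "massoc b d" using assms(15) \<open>massoc a c\<close> by (rule massoc_mult_cancel_left[OF cancel])
  ultimately show ?thesis ..
qed

end
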